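(* Let $G$ be a compact Hausdorff topological group acting continuously by isometries on a proper, purely $1$-unrectifiable metric space $\mathcal{M}$. Then $\mathcal{M}/G$ is purely $1$-unrectifiable.
   Context: $\mathcal{M}/G=\{\overline{Gx}:x\in\mathcal{M}\}$ with the metric $d_{\mathcal{M}/G}(\overline{Gx},\overline{Gy})=\inf\{d(x',y'):x'\in\overline{Gx},y'\in\overline{Gy}\}$ (the Hausdorff distance). A metric space is proper if closed balls are compact; it is purely $1$-unrectifiable if for every $A\subset\mathbb{R}$ and every Lipschitz $f:A\to\mathcal{M}$ the $1$-dimensional Hausdorff measure of $f(A)$ is $0$. *)

theory Defs
  imports "HOL-Analysis.Analysis"
begin

definition ediam :: "('a \<Rightarrow> 'a \<Rightarrow> real) \<Rightarrow> 'a set \<Rightarrow> ennreal" where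
  "ediam d S = (SUP x\<in>S. SUP y\<in>S. ennreal (d x y))"

definition hausdorff1_pre :: "'a set \<Rightarrow> ('a \<Rightarrow> 'a \<Rightarrow> real) \<Rightarrow> real \<Rightarrow> 'a set \<Rightarrow> ennreal" where
  "hausdorff1_pre M d \<delta> E =
     (INF C \<in> {C :: nat \<Rightarrow> 'a set. (\<forall>i. C i \<subseteq> M \<and> ediam d (C i) \<le> ennreal \<delta>) \<and> E \<subseteq> (\<Union>i. C i)}.
        (\<Sum>i. ediam d (C i)))"

definition hausdorff1 :: "'a set \<Rightarrow> ('a \<Rightarrow> 'a \<Rightarrow> real) \<Rightarrow> 'a set \<Rightarrow> ennreal" where
  "hausdorff1 M d E = (SUP \<delta>\<in>{0<..}. hausdorff1_pre M d \<delta> E)"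

definition purely_1_unrectifiable :: "'a set \<Rightarrow> ('a \<Rightarrow> 'a \<Rightarrow> real) \<Rightarrow> bool" where
  "purely_1_unrectifiable M d \<longleftrightarrow>
     (\<forall>(A :: real set) (f :: real \<Rightarrow> 'a) L.
        f ` A \<subseteq> M \<and> (\<forall>x\<in>A. \<forall>y\<in>A. d (f x) (f y) \<le> L * dist x y)
        \<longrightarrow> hausdorff1 M d (f ` A) = 0)"

definition orbit_closures :: "('g \<Rightarrow> 'm \<Rightarrow> 'm::topological_space) \<Rightarrow> 'm set set" where
  "orbit_closures act = {closure (range (\<lambda>g. act g x)) | x. True}"

definition quot_dist :: "'m::metric_space set \<Rightarrow> 'm set \<Rightarrow> real" where
  "quot_dist A B = Inf {dist x y | x y. x \<in> A \<and> y \<in> B}"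

end

theory Submission
  imports Defs
begin

text \<open>Orbits of a compact group are compact, so the distance between two orbits is attained at
  any prescribed point of the first one.  Hence a map \<open>A \<rightarrow> M/G\<close> that is \<open>L\<close>-Lipschitz lifts
  to an \<open>L\<close>-Lipschitz map \<open>A \<rightarrow> M\<close>: on a finite set, go through the points from left to right,
  each time choosing in the next orbit the point nearest to the previously chosen one; the finite
  lifts then yield a global lift by compactness of the product of the orbits (Tychonoff).
  The quotient map is 1-Lipschitz, so it does not increase \<open>H\<^sup>1\<close>, and the \<open>H\<^sup>1\<close>-null lifted
  image maps onto the original image.\<close>

lemma ediam_image_le:
  assumes "\<And>x y. x \<in> S \<Longrightarrow> y \<in> S \<Longrightarrow> d' (p x) (p y) \<le> d x y"
  shows "ediam d' (p ` S) \<le> ediam d S"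
  unfolding ediam_def image_image
  by (intro SUP_subset_mono order_refl ennreal_leI assms)

lemma hausdorff1_image_le:
  assumes "p ` M \<subseteq> M'" and "\<And>x y. x \<in> M \<Longrightarrow> y \<in> M \<Longrightarrow> d' (p x) (p y) \<le> d x y"
    and "E' \<subseteq> p ` E"
  shows "hausdorff1 M' d' E' \<le> hausdorff1 M d E"
  unfolding hausdorff1_def
proof (rule SUP_mono')
  fix \<delta> :: real
  show "hausdorff1_pre M' d' \<delta> E' \<le> hausdorff1_pre M d \<delta> E"
    unfolding hausdorff1_pre_def
  proof (rule INF_greatest)
    fix C :: "nat \<Rightarrow> _" assume "C \<in> {C. (\<forall>i. C i \<subseteq> M \<and> ediam d (C i) \<le> ennreal \<delta>) \<and> E \<subseteq> (\<Union>i. C i)}"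
    then have C: "\<And>i. C i \<subseteq> M" "\<And>i. ediam d (C i) \<le> ennreal \<delta>" "E \<subseteq> (\<Union>i. C i)"
      by auto
    have diam_le: "ediam d' (p ` C i) \<le> ediam d (C i)" for i
      using C(1) assms(2) by (intro ediam_image_le) blast
    have "\<And>i. p ` C i \<subseteq> M'"
      using C(1) assms(1) by blast
    moreover have "\<And>i. ediam d' (p ` C i) \<le> ennreal \<delta>"
      using diam_le C(2) by (rule order_trans)
    moreover have "E' \<subseteq> (\<Union>i. p ` C i)"
    proof
      fix x assume "x \<in> E'"
      then obtain e where "e \<in> E" "x = p e"
        using assms(3) by blast
      then show "x \<in> (\<Union>i. p ` C i)"
        using C(3) by blast
    qed
    ultimately have "(\<lambda>i. p ` C i) \<in> {C. (\<forall>i. C i \<subseteq> M' \<and> ediam d' (C i) \<le> ennreal \<delta>) \<and> E' \<subseteq> (\<Union>i. C i)}"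
      by simp
    then have "(INF C \<in> {C. (\<forall>i. C i \<subseteq> M' \<and> ediam d' (C i) \<le> ennreal \<delta>) \<and> E' \<subseteq> (\<Union>i. C i)}.
        (\<Sum>i. ediam d' (C i))) \<le> (\<Sum>i. ediam d' (p ` C i))"
      by (rule INF_lower)
    also have "\<dots> \<le> (\<Sum>i. ediam d (C i))"
      by (rule suminf_le[OF diam_le summableI summableI])
    finally show "(INF C \<in> {C. (\<forall>i. C i \<subseteq> M' \<and> ediam d' (C i) \<le> ennreal \<delta>) \<and> E' \<subseteq> (\<Union>i. C i)}.
        (\<Sum>i. ediam d' (C i))) \<le> (\<Sum>i. ediam d (C i))" .
  qed
qed

lemma lipschitz_bound_fun_upd_above_Max:
  fixes s :: "real \<Rightarrow> 'a::metric_space"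
  assumes lip: "\<forall>a\<in>F. \<forall>c\<in>F. dist (s a) (s c) \<le> L * dist a c"
    and m: "m \<in> F" "\<forall>a\<in>F. a \<le> m" "m < b"
    and z: "dist (s m) z \<le> L * (b - m)"
  shows "\<forall>a\<in>insert b F. \<forall>c\<in>insert b F. dist ((s(b := z)) a) ((s(b := z)) c) \<le> L * dist a c"
proof -
  have new: "dist (s a) z \<le> L * dist a b" if "a \<in> F" for a
  proof -
    have am: "a \<le> m"
      using that m(2) by blast
    have "dist (s a) (s m) \<le> L * dist a m"
      using lip that m(1) by blast
    then have sm: "dist (s a) (s m) \<le> L * (m - a)"
      using am by (simp add: dist_real_def)
    have "dist (s a) z \<le> dist (s a) (s m) + dist (s m) z"
      by (rule dist_triangle)
    also have "\<dots> \<le> L * (m - a) + L * (b - m)"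
      using sm z by (rule add_mono)
    also have "\<dots> = L * dist a b"
      using am m(3) by (simp add: dist_real_def algebra_simps)
    finally show ?thesis .
  qed
  have "b \<notin> F"
    using m by force
  then show ?thesis
    using lip new by (auto simp: dist_commute)
qed

lemma lipschitz_selection_of_finite_selections:
  fixes K :: "'a::metric_space \<Rightarrow> 'b::metric_space set"
  assumes compact: "\<And>a. compact (K a)"
    and finite_sel: "\<And>F. finite F \<Longrightarrow> F \<subseteq> A \<Longrightarrow>
      \<exists>s. (\<forall>a. s a \<in> K a) \<and> (\<forall>a\<in>F. \<forall>b\<in>F. dist (s a) (s b) \<le> L * dist a b)"
  shows "\<exists>s. (\<forall>a. s a \<in> K a) \<and> (\<forall>a\<in>A. \<forall>b\<in>A. dist (s a) (s b) \<le> L * dist a b)"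
proof -
  define P where "P = PiE UNIV K"
  define C where "C = (\<lambda>(a, b). {s :: 'a \<Rightarrow> 'b. dist (s a) (s b) \<le> L * dist a b})"
  have "compactin (product_topology (\<lambda>i. euclidean) UNIV) P"
    unfolding P_def compactin_PiE by (simp add: compact)
  then have "compact P"
    by (simp add: euclidean_product_topology)
  then have "P \<inter> (\<Inter>i\<in>A \<times> A. C i) \<noteq> {}"
  proof (rule compact_imp_fip_image)
    fix i :: "'a \<times> 'a"
    obtain a b where i: "i = (a, b)" by fastforce
    have "continuous_on UNIV (\<lambda>s :: 'a \<Rightarrow> 'b. dist (s a) (s b))"
      by (intro continuous_on_dist continuous_on_product_coordinates)
    then show "closed (C i)"
      unfolding C_def i by (simp add: closed_Collect_le continuous_on_const)
  next
    fix I assume I: "finite I" "I \<subseteq> A \<times> A"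
    define F where "F = fst ` I \<union> snd ` I"
    have "finite F" "F \<subseteq> A"
      using I unfolding F_def by auto
    then obtain s where s: "\<forall>a. s a \<in> K a" "\<forall>a\<in>F. \<forall>b\<in>F. dist (s a) (s b) \<le> L * dist a b"
      using finite_sel by blast
    have "s \<in> C i" if "i \<in> I" for i
    proof -
      obtain a b where i: "i = (a, b)" by fastforce
      have "a \<in> F" "b \<in> F"
        using that i unfolding F_def by force+
      then show ?thesis
        using s(2) unfolding C_def i by simp
    qed
    moreover have "s \<in> P"
      using s(1) unfolding P_def by auto
    ultimately show "P \<inter> (\<Inter>i\<in>I. C i) \<noteq> {}"
      by blast
  qed
  then obtain s where s: "s \<in> P" "\<And>a b. a \<in> A \<Longrightarrow> b \<in> A \<Longrightarrow> s \<in> C (a, b)"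
    by blast
  have "\<forall>a. s a \<in> K a"
    using s(1) unfolding P_def by auto
  moreover have "\<forall>a\<in>A. \<forall>b\<in>A. dist (s a) (s b) \<le> L * dist a b"
    using s(2) unfolding C_def by simp
  ultimately show ?thesis
    by blast
qed

locale compact_isometric_action =
  fixes act :: "'g::{topological_group_add, t2_space} \<Rightarrow> 'm::metric_space \<Rightarrow> 'm"
  assumes G_compact: "compact (UNIV :: 'g set)"
    and act_zero: "\<And>x. act 0 x = x"
    and act_add: "\<And>g h x. act (g + h) x = act g (act h x)"
    and act_cont: "continuous_on UNIV (\<lambda>p :: 'g \<times> 'm. act (fst p) (snd p))"
    and act_isom: "\<And>g x y. dist (act g x) (act g y) = dist x y"
begin

definition orbit :: "'m \<Rightarrow> 'm set" where
  "orbit x = range (\<lambda>g. act g x)"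

lemma continuous_on_orbit_map: "continuous_on UNIV (\<lambda>g. act g x)"
proof -
  have "continuous_on UNIV ((\<lambda>p :: 'g \<times> 'm. act (fst p) (snd p)) \<circ> (\<lambda>g. (g, x)))"
    by (intro continuous_on_compose continuous_intros continuous_on_subset[OF act_cont]) simp
  then show ?thesis
    by (simp add: o_def)
qed

lemma compact_orbit: "compact (orbit x)"
  unfolding orbit_def by (rule compact_continuous_image[OF continuous_on_orbit_map G_compact])

lemma closure_orbit: "closure (orbit x) = orbit x"
  using compact_orbit compact_imp_closed closure_closed by blast

lemma orbit_closures_eq: "orbit_closures act = range orbit"
  unfolding orbit_closures_def orbit_def[symmetric] closure_orbit by auto

lemma orbit_self: "x \<in> orbit x"
  unfolding orbit_def by (metis act_zero rangeI)

lemma act_in_orbit: "y \<in> orbit x \<Longrightarrow> act g y \<in> orbit x"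
  unfolding orbit_def by (auto simp: act_add[symmetric])

lemma orbit_eq:
  assumes "y \<in> orbit x"
  shows "orbit y = orbit x"
proof -
  obtain h where y: "y = act h x"
    using assms unfolding orbit_def by auto
  have "act g x = act (g - h) y" for g
    by (simp add: y act_add[symmetric])
  then show ?thesis
    using act_in_orbit[OF assms] unfolding orbit_def by blast
qed

lemma quot_dist_orbit_le: "quot_dist (orbit x) (orbit y) \<le> dist x y"
  unfolding quot_dist_def
  by (rule cInf_lower) (use orbit_self in blast, rule bdd_belowI[of _ 0], auto)

lemma quot_dist_orbit_attained: "\<exists>z'\<in>orbit z. dist x z' = quot_dist (orbit x) (orbit z)"
proof -
  obtain z' where z': "z' \<in> orbit z" "\<And>q. q \<in> orbit z \<Longrightarrow> dist x z' \<le> dist x q"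
    using continuous_attains_inf[OF compact_orbit, of z "dist x"] orbit_self
      continuous_on_dist[OF continuous_on_const continuous_on_id] by blast
  have "quot_dist (orbit x) (orbit z) = dist x z'"
    unfolding quot_dist_def
  proof (rule cInf_eq_minimum)
    show "dist x z' \<in> {dist p q |p q. p \<in> orbit x \<and> q \<in> orbit z}"
      using z'(1) orbit_self by blast
  next
    fix r assume "r \<in> {dist p q |p q. p \<in> orbit x \<and> q \<in> orbit z}"
    then obtain g q where r: "r = dist (act g x) q" "q \<in> orbit z"
      unfolding orbit_def by auto
    \<comment> \<open>moving both points by \<open>-g\<close> brings the first one back to \<open>x\<close>\<close>
    have "dist (act g x) q = dist x (act (- g) q)"
      using act_isom[of "- g" "act g x" q] by (simp add: act_add[symmetric] act_zero)
    then show "dist x z' \<le> r"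
      using z'(2) act_in_orbit r by simp
  qed
  then show ?thesis
    using z'(1) by auto
qed

lemma lipschitz_lift_finite:
  fixes rep :: "real \<Rightarrow> 'm"
  assumes lip: "\<And>x y. x \<in> A \<Longrightarrow> y \<in> A \<Longrightarrow> quot_dist (orbit (rep x)) (orbit (rep y)) \<le> L * dist x y"
  shows "finite F \<Longrightarrow> F \<subseteq> A \<Longrightarrow>
    \<exists>s. (\<forall>a. s a \<in> orbit (rep a)) \<and> (\<forall>a\<in>F. \<forall>b\<in>F. dist (s a) (s b) \<le> L * dist a b)"
proof (induction F rule: finite_linorder_max_induct)
  case empty
  show ?case
    using orbit_self by blast
next
  case (insert b F)
  then obtain s where s: "\<forall>a. s a \<in> orbit (rep a)" "\<forall>a\<in>F. \<forall>c\<in>F. dist (s a) (s c) \<le> L * dist a c"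
    by blast
  show ?case
  proof (cases "F = {}")
    case True
    then show ?thesis
      using s(1) by auto
  next
    case False
    define m where "m = Max F"
    have m: "m \<in> F" "\<forall>a\<in>F. a \<le> m" "m < b"
      using False insert.hyps m_def by auto
    obtain z where z: "z \<in> orbit (rep b)" "dist (s m) z = quot_dist (orbit (s m)) (orbit (rep b))"
      using quot_dist_orbit_attained by blast
    have "m \<in> A" "b \<in> A"
      using m(1) insert.prems by auto
    then have "dist (s m) z \<le> L * (b - m)"
      using z(2) orbit_eq[OF s(1)[rule_format, of m]] lip[of m b] m(3)
      by (simp add: dist_real_def)
    then show ?thesis
      using lipschitz_bound_fun_upd_above_Max[OF s(2) m] s(1) z(1)
      by (intro exI[of _ "s(b := z)"]) simp
  qed
qed

lemma lipschitz_lift: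
  fixes rep :: "real \<Rightarrow> 'm"
  assumes "\<And>x y. x \<in> A \<Longrightarrow> y \<in> A \<Longrightarrow> quot_dist (orbit (rep x)) (orbit (rep y)) \<le> L * dist x y"
  shows "\<exists>s. (\<forall>a. s a \<in> orbit (rep a)) \<and> (\<forall>a\<in>A. \<forall>b\<in>A. dist (s a) (s b) \<le> L * dist a b)"
  using lipschitz_selection_of_finite_selections[OF compact_orbit lipschitz_lift_finite[OF assms]] .

lemma purely_1_unrectifiable_orbit_space:
  assumes "purely_1_unrectifiable (UNIV :: 'm set) dist"
  shows "purely_1_unrectifiable (range orbit) quot_dist"
  unfolding purely_1_unrectifiable_def
proof (intro allI impI)
  fix A :: "real set" and f :: "real \<Rightarrow> 'm set" and L :: real
  assume f: "f ` A \<subseteq> range orbit \<and> (\<forall>x\<in>A. \<forall>y\<in>A. quot_dist (f x) (f y) \<le> L * dist x y)"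
  then have "\<forall>a\<in>A. \<exists>x. f a = orbit x"
    by blast
  then obtain rep where rep: "\<And>a. a \<in> A \<Longrightarrow> f a = orbit (rep a)"
    by metis
  have "quot_dist (orbit (rep x)) (orbit (rep y)) \<le> L * dist x y" if "x \<in> A" "y \<in> A" for x y
    using f that by (simp add: rep)
  then obtain s where s: "\<forall>a. s a \<in> orbit (rep a)" "\<forall>a\<in>A. \<forall>b\<in>A. dist (s a) (s b) \<le> L * dist a b"
    using lipschitz_lift by blast
  have "hausdorff1 UNIV dist (s ` A) = 0"
    using assms s(2) unfolding purely_1_unrectifiable_def by blast
  moreover have "f ` A \<subseteq> orbit ` s ` A"
  proof
    fix X assume "X \<in> f ` A"
    then obtain a where "a \<in> A" "X = orbit (rep a)"
      using rep by blast
    then show "X \<in> orbit ` s ` A"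
      using orbit_eq[OF s(1)[rule_format, of a]] by blast
  qed
  then have "hausdorff1 (range orbit) quot_dist (f ` A) \<le> hausdorff1 UNIV dist (s ` A)"
    using quot_dist_orbit_le by (intro hausdorff1_image_le) auto
  ultimately show "hausdorff1 (range orbit) quot_dist (f ` A) = 0"
    by simp
qed

end

theorem corollary4p11:
  fixes act :: "'g::{topological_group_add, t2_space} \<Rightarrow> 'm::metric_space \<Rightarrow> 'm"
  assumes G_compact: "compact (UNIV :: 'g set)"
    and act_zero: "\<And>x. act 0 x = x"
    and act_add: "\<And>g h x. act (g + h) x = act g (act h x)"
    and act_cont: "continuous_on UNIV (\<lambda>p :: 'g \<times> 'm. act (fst p) (snd p))"
    and act_isom: "\<And>g x y. dist (act g x) (act g y) = dist x y"
    and proper: "\<And>(x :: 'm) r. compact (cball x r)"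
    and pu: "purely_1_unrectifiable (UNIV :: 'm set) dist"
  shows "purely_1_unrectifiable (orbit_closures act) quot_dist"
proof -
  interpret compact_isometric_action act
    using G_compact act_zero act_add act_cont act_isom by unfold_locales
  show ?thesis
    using purely_1_unrectifiable_orbit_space[OF pu] by (simp add: orbit_closures_eq)
qed

end
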